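(* Let $\mathfrak{S}=(\mathcal{X},\mathsf{S},\gamma,(\Lambda_{a})_{a\in\mathcal{A}})$ be a spectral decomposition system for the Euclidean space $\mathfrak{H}$, let $\varphi\colon\mathcal{X}\to\left]-\infty,+\infty\right]$ be proper and $\mathsf{S}$-invariant, and let $Y\in\mathfrak{H}$. Set $\mathcal{M}=\operatorname{Argmin}(\varphi\circ\gamma-\langle\cdot,Y\rangle)$ and $M=\operatorname{Argmin}(\varphi-\langle\cdot,\gamma(Y)\rangle)$. Then: (i) $\inf_{X\in\mathfrak{H}}\big(\varphi(\gamma(X))-\langle X,Y\rangle\big)=\inf_{x\in\mathcal{X}}\big(\varphi(x)-\langle x,\gamma(Y)\rangle\big)$; (ii) for every $X\in\mathfrak{H}$: $X\in\mathcal{M}$ if and only if $\gamma(X)\in M$ and there exists $a\in\mathcal{A}$ such that $X=\Lambda_a\gamma(X)$ and $Y=\Lambda_a\gamma(Y)$; (iii) for every $x\in\mathcal{X}$ and every $b\in\mathcal{A}_Y$: $\Lambda_bx\in\mathcal{M}$ if and only if $x\in M$; (iv) $\mathcal{M}=\{\Lambda_bx : x\in M,\ b\in\mathcal{A}_Y\}$; (v) $\mathcal{M}$ is convex if and only if $M$ is convex; (vi) $\mathcal{M}$ is a singleton if and only if $M$ is a singleton.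
   Context: A Euclidean space is a finite-dimensional real inner product space; inner products are written $\langle\cdot,\cdot\rangle$ and norms $\|\cdot\|$. Let $\mathfrak{H}$ and $\mathcal{X}$ be Euclidean spaces, let $\mathsf{S}$ be a group acting on $\mathcal{X}$ by linear isometries, let $\gamma\colon\mathfrak{H}\to\mathcal{X}$, and let $(\Lambda_a)_{a\in\mathcal{A}}$ be a family of linear operators from $\mathcal{X}$ to $\mathfrak{H}$. The orbit of $x$ is $\mathsf{S}\cdot x=\{s\cdot x: s\in\mathsf{S}\}$; a map $f$ on $\mathcal{X}$ is $\mathsf{S}$-invariant if $f(s\cdot x)=f(x)$ for all $s,x$. The tuple is a spectral decomposition system for $\mathfrak{H}$ if: [A] every $\Lambda_a$ is an isometry; [B] there exists an $\mathsf{S}$-invariant $\tau\colon\mathcal{X}\to\mathcal{X}$ with $\tau(x)\in\mathsf{S}\cdot x$ for all $x$ and $\gamma\circ\Lambda_a=\tau$ for all $a$; [C] for every $X\in\mathfrak{H}$ there is $a$ with $X=\Lambda_a\gamma(X)$; [D] $\langle X,Y\rangle\leq\langle\gamma(X),\gamma(Y)\rangle$ for all $X,Y\in\mathfrak{H}$. For $X\in\mathfrak{H}$, $\mathcal{A}_X=\{a\in\mathcal{A}: X=\Lambda_a\gamma(X)\}$. A function is proper if it never takes $-\infty$ and is finite somewhere. For $g\colon\mathcal{H}\to\left]-\infty,+\infty\right]$, $\operatorname{Argmin}g=\{x: g(x)=\inf g(\mathcal{H})\}$ if $\inf g(\mathcal{H})<+\infty$, and $\operatorname{Argmin}g=\varnothing$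 otherwise. *)

theory Defs
  imports "HOL-Analysis.Analysis"
begin

text \<open>The group S acting on X by linear isometries is represented by the set of maps
  x \<mapsto> s \<cdot> x it induces; this set is a group of linear isometries under composition.\<close>
definition isometry_group :: "('x::euclidean_space \<Rightarrow> 'x) set \<Rightarrow> bool" where
  "isometry_group S \<longleftrightarrow>
     id \<in> S \<and>
     (\<forall>s\<in>S. \<forall>t\<in>S. s \<circ> t \<in> S) \<and>
     (\<forall>s\<in>S. \<exists>t\<in>S. s \<circ> t = id \<and> t \<circ> s = id) \<and>
     (\<forall>s\<in>S. linear s \<and> (\<forall>x. norm (s x) = norm x))"

definition orbit :: "('x \<Rightarrow> 'x) set \<Rightarrow> 'x \<Rightarrow> 'x set" where
  "orbit S x = {s x | s. s \<in> S}"

definition S_invariant :: "('x \<Rightarrow> 'x) set \<Rightarrow> ('x \<Rightarrow> 'b) \<Rightarrow> bool" where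
  "S_invariant S f \<longleftrightarrow> (\<forall>s\<in>S. \<forall>x. f (s x) = f x)"

definition spectral_decomposition_system ::
  "('x::euclidean_space \<Rightarrow> 'x) set \<Rightarrow> ('h::euclidean_space \<Rightarrow> 'x) \<Rightarrow> ('a \<Rightarrow> 'x \<Rightarrow> 'h) \<Rightarrow> bool" where
  "spectral_decomposition_system S \<gamma> \<Lambda> \<longleftrightarrow>
     isometry_group S \<and>
     (\<forall>a. linear (\<Lambda> a) \<and> (\<forall>x. norm (\<Lambda> a x) = norm x)) \<and>
     (\<exists>\<tau>. S_invariant S \<tau> \<and> (\<forall>x. \<tau> x \<in> orbit S x) \<and> (\<forall>a. \<gamma> \<circ> \<Lambda> a = \<tau>)) \<and>
     (\<forall>X. \<exists>a. X = \<Lambda> a (\<gamma> X)) \<and>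
     (\<forall>X Y. X \<bullet> Y \<le> \<gamma> X \<bullet> \<gamma> Y)"

definition A_of :: "('h \<Rightarrow> 'x) \<Rightarrow> ('a \<Rightarrow> 'x \<Rightarrow> 'h) \<Rightarrow> 'h \<Rightarrow> 'a set" where
  "A_of \<gamma> \<Lambda> X = {a. X = \<Lambda> a (\<gamma> X)}"

text \<open>Functions into ]-\<infinity>,+\<infinity>] are modelled as ereal-valued functions never equal to -\<infinity>.\<close>
definition proper :: "('x \<Rightarrow> ereal) \<Rightarrow> bool" where
  "proper f \<longleftrightarrow> (\<forall>x. f x \<noteq> -\<infinity>) \<and> (\<exists>x. f x \<noteq> \<infinity>)"

definition Argmin :: "('x \<Rightarrow> ereal) \<Rightarrow> 'x set" where
  "Argmin g = (if (INF x. g x) < \<infinity> then {x. g x = (INF x. g x)} else {})"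

end

theory Submission
  imports Defs
begin

text \<open>Every \<open>\<Lambda>\<^sub>a\<close> is an isometry and \<open>\<langle>X, Y\<rangle> \<le> \<langle>\<gamma> X, \<gamma> Y\<rangle>\<close>, so
  \<open>\<phi> (\<gamma> X) - \<langle>X, Y\<rangle> \<ge> \<phi> (\<gamma> X) - \<langle>\<gamma> X, \<gamma> Y\<rangle>\<close>, with equality at \<open>X = \<Lambda>\<^sub>b x\<close>
  whenever \<open>Y = \<Lambda>\<^sub>b (\<gamma> Y)\<close>, because \<open>\<gamma> (\<Lambda>\<^sub>b x)\<close> lies in the orbit of \<open>x\<close>, on which
  \<open>\<phi>\<close> is constant. This gives (i) and (iii). At a minimizer the inequality is tight, and
  \<open>\<langle>X, Y\<rangle> = \<langle>\<gamma> X, \<gamma> Y\<rangle>\<close> forces a simultaneous decomposition \<open>X = \<Lambda>\<^sub>a (\<gamma> X)\<close>,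
  \<open>Y = \<Lambda>\<^sub>a (\<gamma> Y)\<close>; this gives (ii) and (iv).
  For (v), a convex combination \<open>X\<close> of minimizers still satisfies the equality, so
  \<open>\<gamma> X = \<Lambda>\<^sub>a\<^sup>* X\<close> is the same convex combination of the points \<open>\<Lambda>\<^sub>a\<^sup>* X\<^sub>i\<close>. Each of
  these lies in the convex hull of the orbit of \<open>\<gamma> X\<^sub>i\<close> and attains the maximum of
  \<open>\<langle>\<gamma> Y, _\<rangle>\<close> there, hence lies in the convex hull of the maximizing orbit points, all of which
  minimize \<open>\<phi> - \<langle>_, \<gamma> Y\<rangle>\<close>. For (vi), all minimizers have the norm of the unique reduced
  minimizer, and a convex subset of a sphere in a Euclidean space has at most one point.\<close>

lemma linear_norm_preserving_inner:
  fixes f :: "'a::real_inner \<Rightarrow> 'b::real_inner"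
  assumes "linear f" and "\<And>x. norm (f x) = norm x"
  shows "f x \<bullet> f y = x \<bullet> y"
proof -
  have "norm (f x + f y) = norm (x + y)"
    using assms by (simp add: linear_add[symmetric])
  then show ?thesis
    by (simp only: dot_norm[of "f x" "f y"] dot_norm[of x y] assms(2))
qed

lemma adjoint_linear_norm_preserving_cancel:
  fixes f :: "'a::euclidean_space \<Rightarrow> 'b::euclidean_space"
  assumes "linear f" and "\<And>x. norm (f x) = norm x"
  shows "adjoint f (f x) = x"
  using adjoint_works[OF assms(1)] linear_norm_preserving_inner[OF assms]
  by (intro vector_eq_ldot[THEN iffD1]) simp

lemma eq_if_norm_eq_inner_ge:
  fixes x u :: "'a::real_inner"
  assumes "norm u = norm x" and "x \<bullet> x \<le> x \<bullet> u"
  shows "u = x"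
proof -
  have "(norm (x - u))\<^sup>2 = x \<bullet> x + u \<bullet> u - 2 * (x \<bullet> u)"
    by (simp add: power2_norm_eq_inner inner_diff inner_commute)
  also have "\<dots> \<le> 0"
    using assms by (simp add: dot_square_norm)
  finally show ?thesis by simp
qed

lemma convex_subset_sphere_eq:
  fixes A :: "'a::real_inner set"
  assumes "convex A" and "A \<subseteq> sphere 0 r" and "x \<in> A" and "y \<in> A"
  shows "x = y"
proof -
  have "(1/2) *\<^sub>R x + (1/2) *\<^sub>R y \<in> A"
    using convexD[OF assms(1,3,4), of "1/2" "1/2"] by simp
  then have "norm ((1/2) *\<^sub>R (x + y)) = r"
    using assms(2) by (auto simp: scaleR_add_right)
  moreover have nx: "norm x = r" and ny: "norm y = r"
    using assms(2-4) by auto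
  ultimately have "norm (x + y) = norm x + norm y"
    by simp
  then have "r *\<^sub>R y = r *\<^sub>R x"
    using norm_triangle_eq[of x y] nx ny by simp
  then show ?thesis
    using nx ny by (cases "r = 0") auto
qed

lemma mem_convex_hull_if_support_bound:
  fixes K :: "'a::euclidean_space set"
  assumes "compact K" and "\<And>v. \<exists>k\<in>K. v \<bullet> \<xi> \<le> v \<bullet> k"
  shows "\<xi> \<in> convex hull K"
proof (rule ccontr)
  assume "\<xi> \<notin> convex hull K"
  then obtain w c where "w \<bullet> \<xi> < c" and "\<forall>x\<in>convex hull K. c < w \<bullet> x"
    using separating_hyperplane_closed_point[OF convex_convex_hull]
      compact_imp_closed[OF compact_convex_hull[OF assms(1)]] by blast
  moreover obtain k where "k \<in> K" and "- w \<bullet> \<xi> \<le> - w \<bullet> k"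
    using assms(2) by blast
  ultimately show False
    using hull_inc[of k K] by fastforce
qed

lemma mem_convex_hull_supporting_hyperplane:
  fixes K :: "'a::euclidean_space set"
  assumes "compact K" and "\<And>k. k \<in> K \<Longrightarrow> v \<bullet> k \<le> c"
    and "\<xi> \<in> convex hull K" and "v \<bullet> \<xi> = c"
  shows "\<xi> \<in> convex hull {k\<in>K. v \<bullet> k = c}"
proof -
  define T where "T = convex hull K \<inter> {x. v \<bullet> x = c}"
  have "convex hull K \<subseteq> {x. v \<bullet> x \<le> c}"
    by (rule hull_minimal) (use assms(2) convex_halfspace_le in auto)
  then have "T face_of convex hull K"
    unfolding T_def by (intro face_of_Int_supporting_hyperplane_le) auto
  then obtain K' where "K' \<subseteq> K" and T: "T = convex hull K'"
    using face_of_convex_hull_subset[OF assms(1)] by metis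
  moreover have "K' \<subseteq> T"
    unfolding T by (rule hull_subset)
  ultimately have "K' \<subseteq> {k\<in>K. v \<bullet> k = c}"
    unfolding T_def by auto
  moreover have "\<xi> \<in> T"
    unfolding T_def using assms(3,4) by simp
  ultimately show ?thesis
    unfolding T by (meson hull_mono subsetD)
qed

locale spectral_system =
  fixes S :: "('x::euclidean_space \<Rightarrow> 'x) set"
    and \<gamma> :: "'h::euclidean_space \<Rightarrow> 'x"
    and \<Lambda> :: "'a \<Rightarrow> 'x \<Rightarrow> 'h"
  assumes sds: "spectral_decomposition_system S \<gamma> \<Lambda>"
begin

lemma linear_Lambda: "linear (\<Lambda> a)"
  and norm_Lambda [simp]: "norm (\<Lambda> a x) = norm x"
  and Lambda_gamma_decomposition: "\<exists>a. X = \<Lambda> a (\<gamma> X)"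
  and inner_le_inner_gamma: "X \<bullet> Y \<le> \<gamma> X \<bullet> \<gamma> Y"
  and isometry_group_S: "isometry_group S"
  using sds unfolding spectral_decomposition_system_def by simp_all

lemma inner_Lambda [simp]: "\<Lambda> a x \<bullet> \<Lambda> a y = x \<bullet> y"
  using linear_norm_preserving_inner[OF linear_Lambda norm_Lambda] .

lemma adjoint_Lambda_cancel [simp]: "adjoint (\<Lambda> a) (\<Lambda> a x) = x"
  using adjoint_linear_norm_preserving_cancel[OF linear_Lambda norm_Lambda] .

lemma inner_S:
  assumes "s \<in> S" shows "s x \<bullet> s y = x \<bullet> y"
  using isometry_group_S assms unfolding isometry_group_def
  by (intro linear_norm_preserving_inner) auto

lemma S_inverse:
  assumes "s \<in> S" obtains t where "t \<in> S" "\<And>x. s (t x) = x" "\<And>x. t (s x) = x"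
proof -
  obtain t where "t \<in> S" "s \<circ> t = id" "t \<circ> s = id"
    using isometry_group_S assms unfolding isometry_group_def by blast
  then show thesis
    using that by (simp add: fun_eq_iff)
qed

lemma S_comp: "s \<in> S \<Longrightarrow> t \<in> S \<Longrightarrow> s \<circ> t \<in> S"
  using isometry_group_S unfolding isometry_group_def by blast

lemma bounded_orbit: "bounded (orbit S x)"
  unfolding bounded_iff
proof
  show "\<forall>y\<in>orbit S x. norm y \<le> norm x"
    using isometry_group_S unfolding orbit_def isometry_group_def by auto
qed

lemma gamma_Lambda_orbit:
  obtains \<tau> where "S_invariant S \<tau>" "\<And>x. \<tau> x \<in> orbit S x" "\<And>a x. \<gamma> (\<Lambda> a x) = \<tau> x"
proof -
  obtain \<tau> where "S_invariant S \<tau>" "\<And>x. \<tau> x \<in> orbit S x" "\<And>a. \<gamma> \<circ> \<Lambda> a = \<tau>"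
    using sds unfolding spectral_decomposition_system_def by blast
  then show thesis
    using that by (simp add: fun_eq_iff)
qed

lemma gamma_Lambda_independent: "\<gamma> (\<Lambda> a x) = \<gamma> (\<Lambda> b x)"
  by (metis gamma_Lambda_orbit)

lemma gamma_Lambda_in_orbit: "\<gamma> (\<Lambda> a x) \<in> orbit S x"
  by (metis gamma_Lambda_orbit)

lemma gamma_Lambda_S_invariant: "s \<in> S \<Longrightarrow> \<gamma> (\<Lambda> a (s x)) = \<gamma> (\<Lambda> a x)"
  by (metis gamma_Lambda_orbit S_invariant_def)

lemma gamma_Lambda_gamma [simp]: "\<gamma> (\<Lambda> a (\<gamma> X)) = \<gamma> X"
  by (metis Lambda_gamma_decomposition gamma_Lambda_independent)

lemma norm_gamma [simp]: "norm (\<gamma> X) = norm X"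
  by (metis Lambda_gamma_decomposition norm_Lambda)

lemma inner_gamma_self [simp]: "\<gamma> X \<bullet> \<gamma> X = X \<bullet> X"
  by (simp add: dot_square_norm)

lemma dist_gamma_le: "dist (\<gamma> X) (\<gamma> Y) \<le> dist X Y"
proof -
  have "(dist (\<gamma> X) (\<gamma> Y))\<^sup>2 = X \<bullet> X + Y \<bullet> Y - 2 * (\<gamma> X \<bullet> \<gamma> Y)"
    by (simp add: dist_norm power2_norm_eq_inner inner_diff inner_commute)
  also have "\<dots> \<le> X \<bullet> X + Y \<bullet> Y - 2 * (X \<bullet> Y)"
    using inner_le_inner_gamma[of X Y] by simp
  also have "\<dots> = (dist X Y)\<^sup>2"
    by (simp add: dist_norm power2_norm_eq_inner inner_diff inner_commute)
  finally show ?thesis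
    by (rule power2_le_imp_le) simp
qed

lemma continuous_gamma: "continuous_on UNIV \<gamma>"
  by (rule lipschitz_on_continuous_on[where L=1], rule lipschitz_onI) (simp_all add: dist_gamma_le)

text \<open>The orbits are the fibres of \<open>\<gamma> \<circ> \<Lambda> a\<close>; this makes them closed even though \<open>S\<close> need not be.\<close>
lemma orbit_eq_fibre: "orbit S x = (\<gamma> \<circ> \<Lambda> a) -` {\<gamma> (\<Lambda> a x)}"
proof (intro set_eqI iffI)
  fix y assume "y \<in> orbit S x"
  then show "y \<in> (\<gamma> \<circ> \<Lambda> a) -` {\<gamma> (\<Lambda> a x)}"
    unfolding orbit_def using gamma_Lambda_S_invariant by auto
next
  fix y assume "y \<in> (\<gamma> \<circ> \<Lambda> a) -` {\<gamma> (\<Lambda> a x)}"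
  then have eq: "\<gamma> (\<Lambda> a y) = \<gamma> (\<Lambda> a x)" by simp
  obtain s where s: "s \<in> S" "\<gamma> (\<Lambda> a y) = s y"
    using gamma_Lambda_in_orbit[of a y] unfolding orbit_def by blast
  obtain s' where s': "s' \<in> S" "\<gamma> (\<Lambda> a x) = s' x"
    using gamma_Lambda_in_orbit[of a x] unfolding orbit_def by blast
  obtain t where t: "t \<in> S" "\<And>z. s (t z) = z" "\<And>z. t (s z) = z"
    using S_inverse[OF s(1)] by metis
  have "y = (t \<circ> s') x"
    using t(3)[of y] eq s(2) s'(2) by simp
  then show "y \<in> orbit S x"
    unfolding orbit_def using S_comp[OF t(1) s'(1)] by blast
qed

lemma compact_orbit: "compact (orbit S x)"
proof -
  fix a
  have "continuous_on UNIV (\<Lambda> a)"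
    using linear_Lambda by (simp add: linear_continuous_on linear_conv_bounded_linear)
  then have "continuous_on UNIV (\<gamma> \<circ> \<Lambda> a)"
    using continuous_on_compose continuous_on_subset[OF continuous_gamma] by blast
  then have "closed (orbit S x)"
    unfolding orbit_eq_fibre[of x a] by (rule closed_vimage[OF closed_singleton])
  then show ?thesis
    using bounded_orbit compact_eq_bounded_closed by blast
qed

text \<open>Equality in Cauchy--Schwarz makes \<open>\<gamma>\<close> additive on \<open>X\<close> and \<open>Y\<close>, so a decomposition
  \<open>\<Lambda>\<^sub>a\<close> of \<open>X + Y\<close> splits as \<open>\<Lambda>\<^sub>a (\<gamma> X) + \<Lambda>\<^sub>a (\<gamma> Y)\<close>; since replacing \<open>Y\<close> by
  \<open>\<Lambda>\<^sub>a (\<gamma> Y)\<close> cannot increase \<open>\<langle>X, _\<rangle>\<close>, the two summands must be \<open>X\<close> and \<open>Y\<close>.\<close>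
lemma simultaneous_decomposition:
  assumes eq: "X \<bullet> Y = \<gamma> X \<bullet> \<gamma> Y"
  obtains a where "X = \<Lambda> a (\<gamma> X)" and "Y = \<Lambda> a (\<gamma> Y)"
proof -
  define Z where "Z = X + Y"
  define W where "W = \<gamma> X + \<gamma> Y"
  obtain a where a: "\<Lambda> a (\<gamma> Z) = Z"
    using Lambda_gamma_decomposition by metis
  have WZ: "W \<bullet> W = Z \<bullet> Z"
    unfolding W_def Z_def using eq by (simp add: inner_add inner_commute)
  have "W \<bullet> W = Z \<bullet> X + Z \<bullet> Y"
    unfolding WZ Z_def by (simp add: inner_add_right)
  also have "\<dots> \<le> \<gamma> Z \<bullet> \<gamma> X + \<gamma> Z \<bullet> \<gamma> Y"
    using inner_le_inner_gamma[of Z X] inner_le_inner_gamma[of Z Y] by simp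
  also have "\<dots> = W \<bullet> \<gamma> Z"
    unfolding W_def by (simp add: inner_add inner_commute)
  finally have "\<gamma> Z = W"
    by (rule eq_if_norm_eq_inner_ge[rotated]) (metis WZ norm_gamma norm_eq_sqrt_inner)
  have sum: "\<Lambda> a (\<gamma> X) + \<Lambda> a (\<gamma> Y) = X + Y"
    using \<open>\<gamma> Z = W\<close> a linear_add[OF linear_Lambda, of a "\<gamma> X" "\<gamma> Y"]
    unfolding W_def Z_def by simp
  have "X \<bullet> \<Lambda> a (\<gamma> Y) \<le> X \<bullet> Y"
    using inner_le_inner_gamma[of X "\<Lambda> a (\<gamma> Y)"] eq by simp
  moreover have "X \<bullet> \<Lambda> a (\<gamma> X) + X \<bullet> \<Lambda> a (\<gamma> Y) = X \<bullet> X + X \<bullet> Y"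
    using arg_cong[OF sum, of "inner X"] by (simp add: inner_add_right)
  ultimately have "X \<bullet> X \<le> X \<bullet> \<Lambda> a (\<gamma> X)"
    by linarith
  then have X: "\<Lambda> a (\<gamma> X) = X"
    by (rule eq_if_norm_eq_inner_ge[rotated]) simp
  moreover have "\<Lambda> a (\<gamma> Y) = Y"
    using sum X by simp
  ultimately show thesis
    by (intro that[of a]) simp_all
qed

lemma convex_inner_eq_inner_gamma: "convex {X. X \<bullet> Y = \<gamma> X \<bullet> \<gamma> Y}"
proof (rule convexI, safe)
  fix X1 X2 :: 'h and u v :: real
  assume eq1: "X1 \<bullet> Y = \<gamma> X1 \<bullet> \<gamma> Y" and eq2: "X2 \<bullet> Y = \<gamma> X2 \<bullet> \<gamma> Y"
    and uv: "0 \<le> u" "0 \<le> v" "u + v = 1"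
  define X where "X = u *\<^sub>R X1 + v *\<^sub>R X2"
  obtain a where a: "\<Lambda> a (\<gamma> X) = X"
    using Lambda_gamma_decomposition by metis
  have "\<gamma> X \<bullet> \<gamma> Y = X \<bullet> \<Lambda> a (\<gamma> Y)"
    using inner_Lambda[of a "\<gamma> X" "\<gamma> Y"] unfolding a by (rule sym)
  also have "\<dots> = u * (X1 \<bullet> \<Lambda> a (\<gamma> Y)) + v * (X2 \<bullet> \<Lambda> a (\<gamma> Y))"
    unfolding X_def by (simp add: inner_add_left)
  also have "\<dots> \<le> u * (\<gamma> X1 \<bullet> \<gamma> Y) + v * (\<gamma> X2 \<bullet> \<gamma> Y)"
    using inner_le_inner_gamma[of X1 "\<Lambda> a (\<gamma> Y)"] inner_le_inner_gamma[of X2 "\<Lambda> a (\<gamma> Y)"] uv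
    by (intro add_mono mult_left_mono) simp_all
  also have "\<dots> = X \<bullet> Y"
    unfolding X_def using eq1 eq2 by (simp add: inner_add_left)
  finally show "X \<bullet> Y = \<gamma> X \<bullet> \<gamma> Y"
    using inner_le_inner_gamma[of X Y] by linarith
qed

lemma adjoint_Lambda_in_convex_hull_orbit: "adjoint (\<Lambda> a) X \<in> convex hull (orbit S (\<gamma> X))"
proof (rule mem_convex_hull_if_support_bound[OF compact_orbit])
  fix v
  obtain s where s: "s \<in> S" and "\<gamma> (\<Lambda> a v) = s v"
    using gamma_Lambda_in_orbit unfolding orbit_def by blast
  obtain t where t: "t \<in> S" and "\<And>x. s (t x) = x" and "\<And>x. t (s x) = x"
    using S_inverse[OF s] by metis
  have "v \<bullet> adjoint (\<Lambda> a) X = \<Lambda> a v \<bullet> X"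
    by (rule adjoint_works[OF linear_Lambda])
  also have "\<dots> \<le> \<gamma> (\<Lambda> a v) \<bullet> \<gamma> X"
    by (rule inner_le_inner_gamma)
  also have "\<dots> = s v \<bullet> s (t (\<gamma> X))"
    by (simp add: \<open>\<gamma> (\<Lambda> a v) = s v\<close> \<open>\<And>x. s (t x) = x\<close>)
  also have "\<dots> = v \<bullet> t (\<gamma> X)"
    by (rule inner_S[OF s])
  finally show "\<exists>k\<in>orbit S (\<gamma> X). v \<bullet> adjoint (\<Lambda> a) X \<le> v \<bullet> k"
    using t unfolding orbit_def by blast
qed

end

lemma mem_Argmin_iff: "x \<in> Argmin g \<longleftrightarrow> (INF x. g x) < \<infinity> \<and> g x = (INF x. g x)"
  unfolding Argmin_def by auto

locale spectral_minimization = spectral_system S \<gamma> \<Lambda>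
  for S :: "('x::euclidean_space \<Rightarrow> 'x) set"
    and \<gamma> :: "'h::euclidean_space \<Rightarrow> 'x"
    and \<Lambda> :: "'a \<Rightarrow> 'x \<Rightarrow> 'h" +
  fixes \<phi> :: "'x \<Rightarrow> ereal"
    and Y :: 'h
  assumes proper_\<phi>: "proper \<phi>"
    and invariant_\<phi>: "S_invariant S \<phi>"
begin

abbreviation F :: "'h \<Rightarrow> ereal" where
  "F \<equiv> \<lambda>X. \<phi> (\<gamma> X) - ereal (X \<bullet> Y)"

abbreviation G :: "'x \<Rightarrow> ereal" where
  "G \<equiv> \<lambda>x. \<phi> x - ereal (x \<bullet> \<gamma> Y)"

lemma \<phi>_gamma_Lambda [simp]: "\<phi> (\<gamma> (\<Lambda> a x)) = \<phi> x"
  using gamma_Lambda_in_orbit[of a x] invariant_\<phi> unfolding orbit_def S_invariant_def by auto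

lemma F_Lambda:
  assumes "b \<in> A_of \<gamma> \<Lambda> Y" shows "F (\<Lambda> b x) = G x"
proof -
  have "\<Lambda> b x \<bullet> Y = x \<bullet> \<gamma> Y"
    using assms inner_Lambda[of b x "\<gamma> Y"] unfolding A_of_def by simp
  then show ?thesis by simp
qed

lemma G_gamma_le: "G (\<gamma> X) \<le> F X"
  by (intro ereal_minus_mono) (simp_all add: inner_le_inner_gamma)

lemma ex_mem_A_of: "\<exists>b. b \<in> A_of \<gamma> \<Lambda> Y"
  using Lambda_gamma_decomposition[of Y] unfolding A_of_def by blast

lemma INF_F_eq_INF_G: "(INF X. F X) = (INF x. G x)"
proof (rule antisym)
  obtain b where b: "b \<in> A_of \<gamma> \<Lambda> Y"
    using ex_mem_A_of by metis
  show "(INF X. F X) \<le> (INF x. G x)"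
  proof (rule INF_greatest)
    fix x
    have "(INF X. F X) \<le> F (\<Lambda> b x)"
      by (rule INF_lower) simp
    then show "(INF X. F X) \<le> G x"
      unfolding F_Lambda[OF b] .
  qed
  show "(INF x. G x) \<le> (INF X. F X)"
  proof (rule INF_greatest)
    fix X
    have "(INF x. G x) \<le> G (\<gamma> X)"
      by (rule INF_lower) simp
    then show "(INF x. G x) \<le> F X"
      using G_gamma_le order_trans by blast
  qed
qed

lemma Lambda_mem_Argmin_F_iff:
  assumes "b \<in> A_of \<gamma> \<Lambda> Y" shows "\<Lambda> b x \<in> Argmin F \<longleftrightarrow> x \<in> Argmin G"
  unfolding mem_Argmin_iff INF_F_eq_INF_G F_Lambda[OF assms] ..

text \<open>Cancelling \<open>\<phi> (\<gamma> X)\<close> from \<open>G (\<gamma> X) = F X\<close> needs it to be finite; this is where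
  properness of \<open>\<phi>\<close> enters.\<close>
lemma Argmin_FD:
  assumes "X \<in> Argmin F"
  shows "\<gamma> X \<in> Argmin G" and "X \<bullet> Y = \<gamma> X \<bullet> \<gamma> Y"
proof -
  have "(INF x. G x) \<le> G (\<gamma> X)"
    by (rule INF_lower) simp
  then have eq: "G (\<gamma> X) = F X"
    using assms G_gamma_le[of X] unfolding mem_Argmin_iff INF_F_eq_INF_G by simp
  then show "\<gamma> X \<in> Argmin G"
    using assms unfolding mem_Argmin_iff INF_F_eq_INF_G by simp
  have "F X \<noteq> \<infinity>"
    using assms unfolding mem_Argmin_iff by auto
  moreover have "\<phi> (\<gamma> X) \<noteq> -\<infinity>"
    using proper_\<phi> unfolding proper_def by simp
  ultimately obtain r where "\<phi> (\<gamma> X) = ereal r"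
    by (cases "\<phi> (\<gamma> X)") auto
  with eq show "X \<bullet> Y = \<gamma> X \<bullet> \<gamma> Y"
    by simp
qed

lemma mem_Argmin_F_iff:
  "X \<in> Argmin F \<longleftrightarrow> \<gamma> X \<in> Argmin G \<and> (\<exists>a. X = \<Lambda> a (\<gamma> X) \<and> Y = \<Lambda> a (\<gamma> Y))"
proof
  assume "X \<in> Argmin F"
  then show "\<gamma> X \<in> Argmin G \<and> (\<exists>a. X = \<Lambda> a (\<gamma> X) \<and> Y = \<Lambda> a (\<gamma> Y))"
    using Argmin_FD simultaneous_decomposition by metis
next
  assume "\<gamma> X \<in> Argmin G \<and> (\<exists>a. X = \<Lambda> a (\<gamma> X) \<and> Y = \<Lambda> a (\<gamma> Y))"
  then obtain a where "\<gamma> X \<in> Argmin G" "X = \<Lambda> a (\<gamma> X)" "a \<in> A_of \<gamma> \<Lambda> Y"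
    unfolding A_of_def by blast
  then show "X \<in> Argmin F"
    using Lambda_mem_Argmin_F_iff[of a "\<gamma> X"] by simp
qed

lemma Argmin_F_eq_image: "Argmin F = {\<Lambda> b x | x b. x \<in> Argmin G \<and> b \<in> A_of \<gamma> \<Lambda> Y}"
  using mem_Argmin_F_iff Lambda_mem_Argmin_F_iff unfolding A_of_def by blast

lemma \<phi>_orbit: "k \<in> orbit S x \<Longrightarrow> \<phi> k = \<phi> x"
  using invariant_\<phi> unfolding orbit_def S_invariant_def by blast

lemma Argmin_G_eq_vimage:
  assumes "b \<in> A_of \<gamma> \<Lambda> Y" shows "Argmin G = \<Lambda> b -` Argmin F"
  using Lambda_mem_Argmin_F_iff[OF assms] by blast

lemma adjoint_Lambda_mem_Argmin_G:
  assumes convex: "convex (Argmin G)" and X: "X \<in> Argmin F" and c: "c \<in> A_of \<gamma> \<Lambda> Y"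
  shows "adjoint (\<Lambda> c) X \<in> Argmin G"
proof -
  have Yc: "\<Lambda> c (\<gamma> Y) = Y"
    using c unfolding A_of_def by simp
  have max: "\<gamma> Y \<bullet> k \<le> \<gamma> X \<bullet> \<gamma> Y" if "k \<in> orbit S (\<gamma> X)" for k
  proof -
    have "\<gamma> Y \<bullet> k = \<Lambda> c k \<bullet> Y"
      using inner_Lambda[of c k "\<gamma> Y"] unfolding Yc by (simp add: inner_commute)
    also have "\<dots> \<le> \<gamma> (\<Lambda> c k) \<bullet> \<gamma> Y"
      by (rule inner_le_inner_gamma)
    also have "\<gamma> (\<Lambda> c k) = \<gamma> X"
      using that gamma_Lambda_S_invariant unfolding orbit_def by auto
    finally show ?thesis .
  qed
  have "\<gamma> Y \<bullet> adjoint (\<Lambda> c) X = Y \<bullet> X"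
    using adjoint_works[OF linear_Lambda, of "\<gamma> Y" c X] unfolding Yc .
  also have "\<dots> = \<gamma> X \<bullet> \<gamma> Y"
    using Argmin_FD(2)[OF X] by (simp add: inner_commute)
  finally have "adjoint (\<Lambda> c) X \<in> convex hull {k \<in> orbit S (\<gamma> X). \<gamma> Y \<bullet> k = \<gamma> X \<bullet> \<gamma> Y}"
    using mem_convex_hull_supporting_hyperplane[OF compact_orbit max adjoint_Lambda_in_convex_hull_orbit]
    by blast
  moreover have "{k \<in> orbit S (\<gamma> X). \<gamma> Y \<bullet> k = \<gamma> X \<bullet> \<gamma> Y} \<subseteq> Argmin G"
  proof
    fix k assume "k \<in> {k \<in> orbit S (\<gamma> X). \<gamma> Y \<bullet> k = \<gamma> X \<bullet> \<gamma> Y}"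
    then have "G k = G (\<gamma> X)"
      using \<phi>_orbit[of k "\<gamma> X"] by (simp add: inner_commute)
    then show "k \<in> Argmin G"
      using Argmin_FD(1)[OF X] unfolding mem_Argmin_iff by simp
  qed
  ultimately show ?thesis
    using convex by (meson hull_minimal subsetD)
qed

lemma convex_Argmin_F_iff: "convex (Argmin F) \<longleftrightarrow> convex (Argmin G)"
proof
  assume "convex (Argmin F)"
  obtain b where "b \<in> A_of \<gamma> \<Lambda> Y"
    using ex_mem_A_of by metis
  then show "convex (Argmin G)"
    using convex_linear_vimage[OF linear_Lambda \<open>convex (Argmin F)\<close>]
    by (simp add: Argmin_G_eq_vimage)
next
  assume convex: "convex (Argmin G)"
  show "convex (Argmin F)"
  proof (rule convexI)
    fix X1 X2 :: 'h and u v :: real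
    assume X: "X1 \<in> Argmin F" "X2 \<in> Argmin F" and uv: "0 \<le> u" "0 \<le> v" "u + v = 1"
    define X where "X = u *\<^sub>R X1 + v *\<^sub>R X2"
    have "X \<bullet> Y = \<gamma> X \<bullet> \<gamma> Y"
      using convexD[OF convex_inner_eq_inner_gamma] Argmin_FD(2)[OF X(1)] Argmin_FD(2)[OF X(2)] uv
      unfolding X_def by blast
    then obtain c where c: "X = \<Lambda> c (\<gamma> X)" "Y = \<Lambda> c (\<gamma> Y)"
      by (rule simultaneous_decomposition)
    then have "c \<in> A_of \<gamma> \<Lambda> Y"
      unfolding A_of_def by simp
    have "\<gamma> X = adjoint (\<Lambda> c) X"
      using adjoint_Lambda_cancel[of c "\<gamma> X"] c(1) by simp
    also have "\<dots> = u *\<^sub>R adjoint (\<Lambda> c) X1 + v *\<^sub>R adjoint (\<Lambda> c) X2"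
      unfolding X_def using adjoint_linear[OF linear_Lambda] by (simp add: linear_add linear_scale)
    finally have "\<gamma> X \<in> Argmin G"
      using convexD[OF convex adjoint_Lambda_mem_Argmin_G[OF convex X(1) \<open>c \<in> A_of \<gamma> \<Lambda> Y\<close>]
          adjoint_Lambda_mem_Argmin_G[OF convex X(2) \<open>c \<in> A_of \<gamma> \<Lambda> Y\<close>] uv] by simp
    then have "X \<in> Argmin F"
      using mem_Argmin_F_iff[of X] c by blast
    then show "u *\<^sub>R X1 + v *\<^sub>R X2 \<in> Argmin F"
      unfolding X_def .
  qed
qed

lemma singleton_Argmin_F_iff: "(\<exists>Z. Argmin F = {Z}) \<longleftrightarrow> (\<exists>z. Argmin G = {z})"
proof -
  obtain b where b: "b \<in> A_of \<gamma> \<Lambda> Y"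
    using ex_mem_A_of by metis
  show ?thesis
  proof
    assume "\<exists>Z. Argmin F = {Z}"
    then obtain Z where Z: "Argmin F = {Z}" by blast
    have "Argmin G = {\<gamma> Z}"
    proof (intro set_eqI iffI)
      fix x assume "x \<in> Argmin G"
      moreover have "\<gamma> Z \<in> Argmin G"
        using Argmin_FD(1)[of Z] Z by simp
      ultimately have "\<Lambda> b x = \<Lambda> b (\<gamma> Z)"
        using Z unfolding Argmin_G_eq_vimage[OF b] by simp
      then have "adjoint (\<Lambda> b) (\<Lambda> b x) = adjoint (\<Lambda> b) (\<Lambda> b (\<gamma> Z))"
        by (rule arg_cong)
      then show "x \<in> {\<gamma> Z}"
        by simp
    qed (use Argmin_FD(1)[of Z] Z in simp)
    then show "\<exists>z. Argmin G = {z}" by blast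
  next
    assume "\<exists>z. Argmin G = {z}"
    then obtain z where z: "Argmin G = {z}" by blast
    have Z: "\<Lambda> b z \<in> Argmin F"
      using Lambda_mem_Argmin_F_iff[OF b] z by simp
    have sphere: "Argmin F \<subseteq> sphere 0 (norm z)"
    proof
      fix X assume "X \<in> Argmin F"
      then have "\<gamma> X = z"
        using Argmin_FD(1) z by blast
      then show "X \<in> sphere 0 (norm z)"
        using norm_gamma[of X] by simp
    qed
    have "convex (Argmin F)"
      using convex_Argmin_F_iff z by simp
    then have "Argmin F = {\<Lambda> b z}"
      using convex_subset_sphere_eq[OF _ sphere _ Z] Z by blast
    then show "\<exists>Z. Argmin F = {Z}" by blast
  qed
qed

end

theorem theorem5p1:
  fixes S :: "('x::euclidean_space \<Rightarrow> 'x) set"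
    and \<gamma> :: "'h::euclidean_space \<Rightarrow> 'x"
    and \<Lambda> :: "'a \<Rightarrow> 'x \<Rightarrow> 'h"
    and \<phi> :: "'x \<Rightarrow> ereal"
    and Y :: 'h
  assumes sds: "spectral_decomposition_system S \<gamma> \<Lambda>"
    and prp: "proper \<phi>"
    and inv: "S_invariant S \<phi>"
  defines "\<M> \<equiv> Argmin (\<lambda>X. \<phi> (\<gamma> X) - ereal (X \<bullet> Y))"
    and "M \<equiv> Argmin (\<lambda>x. \<phi> x - ereal (x \<bullet> \<gamma> Y))"
  shows "(INF X. \<phi> (\<gamma> X) - ereal (X \<bullet> Y)) = (INF x. \<phi> x - ereal (x \<bullet> \<gamma> Y))
    \<and> (\<forall>X. X \<in> \<M> \<longleftrightarrow> (\<gamma> X \<in> M \<and> (\<exists>a. X = \<Lambda> a (\<gamma> X) \<and> Y = \<Lambda> a (\<gamma> Y))))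
    \<and> (\<forall>x. \<forall>b \<in> A_of \<gamma> \<Lambda> Y. \<Lambda> b x \<in> \<M> \<longleftrightarrow> x \<in> M)
    \<and> \<M> = {\<Lambda> b x | x b. x \<in> M \<and> b \<in> A_of \<gamma> \<Lambda> Y}
    \<and> (convex \<M> \<longleftrightarrow> convex M)
    \<and> ((\<exists>Z. \<M> = {Z}) \<longleftrightarrow> (\<exists>z. M = {z}))"
proof -
  interpret spectral_minimization S \<gamma> \<Lambda> \<phi> Y
    by unfold_locales (fact sds prp inv)+
  show ?thesis
    unfolding \<M>_def M_def
  proof (intro conjI allI ballI)
    show "(INF X. F X) = (INF x. G x)"
      by (rule INF_F_eq_INF_G)
    show "X \<in> Argmin F \<longleftrightarrow> \<gamma> X \<in> Argmin G \<and> (\<exists>a. X = \<Lambda> a (\<gamma> X) \<and> Y = \<Lambda> a (\<gamma> Y))" for X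
      by (rule mem_Argmin_F_iff)
    show "\<Lambda> b x \<in> Argmin F \<longleftrightarrow> x \<in> Argmin G" if "b \<in> A_of \<gamma> \<Lambda> Y" for b x
      using that by (rule Lambda_mem_Argmin_F_iff)
  qed (fact Argmin_F_eq_image convex_Argmin_F_iff singleton_Argmin_F_iff)+
qed

end
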